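(* Let $X$ be a continuum, let $n\geq 2$ be an integer, and let $f:X\to X$ be a map. Consider the statements: (1) $f$ is multi-sensitive; (2) $F_n(f)$ is multi-sensitive; (3) $SF_n(f)$ is multi-sensitive. Then (1) and (2) are equivalent, and (3) implies (2).
   Context: A continuum is a nonempty compact connected metric space $(X,d)$. For $n\in\mathbb{N}$, $F_n(X)$ is the set of nonempty subsets of $X$ with at most $n$ points, with the Hausdorff metric $d_H$; $F_1(X)=\{\{x\}:x\in X\}$. For $f:X\to X$, $F_n(f)(A)=f(A)$. For $n\geq 2$, $SF_n(X)=F_n(X)/F_1(X)$ (collapsing $F_1(X)$ to a point), $q$ the quotient map, $F_X=q(F_1(X))$, and $SF_n(f)(\chi)=q(F_n(f)(q^{-1}(\chi)))$ if $\chi\neq F_X$, $SF_n(f)(F_X)=F_X$. $SF_n(X)$ carries the metric $\rho(\chi_1,\chi_2)=\mathcal{H}^2(F_1(X)\cup q^{-1}(\chi_1),F_1(X)\cup q^{-1}(\chi_2))$, with $\mathcal{H}^2$ the Hausdorff metric on closed subsets of $F_n(X)$ induced by $d_H$. A map $g$ on a metric space $(Z,D)$ is multi-sensitive if there is $\delta>0$ such that for every $m\in\mathbb{N}$ and all nonempty open $U_1,\dots,U_m\subseteq Z$ there is $k\in\mathbb{N}$ such that for every $i$ there exist $x_i,y_i\in U_i$ with $D(g^k(x_i),g^k(y_i))>\delta$ (with $D=d,d_H,\rho$ for $f,F_n(f),SF_n(f)$). *)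

theory Defs
  imports "HOL-Analysis.Analysis"
begin

definition continuum :: "'a::metric_space set \<Rightarrow> bool" where
  "continuum X \<longleftrightarrow> X \<noteq> {} \<and> compact X \<and> connected X"

definition hdist :: "('b \<Rightarrow> 'b \<Rightarrow> real) \<Rightarrow> 'b set \<Rightarrow> 'b set \<Rightarrow> real" where
  "hdist D A B = max (SUP a\<in>A. INF b\<in>B. D a b) (SUP b\<in>B. INF a\<in>A. D a b)"

definition Fn :: "nat \<Rightarrow> 'a set \<Rightarrow> 'a set set" where
  "Fn n X = {A. A \<subseteq> X \<and> A \<noteq> {} \<and> finite A \<and> card A \<le> n}"

definition dH :: "'a::metric_space set \<Rightarrow> 'a set \<Rightarrow> real" where
  "dH A B = hdist dist A B"

definition Fn_map :: "('a \<Rightarrow> 'a) \<Rightarrow> 'a set \<Rightarrow> 'a set" where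
  "Fn_map f A = f ` A"

text \<open>The quotient SF_n(X) = F_n(X)/F_1(X): the point F_X is represented by None,
  and every other point by Some A with A \<in> F_n(X) - F_1(X) (q^-1 of it is {A}).\<close>
definition SFn :: "nat \<Rightarrow> 'a set \<Rightarrow> 'a set option set" where
  "SFn n X = insert None (Some ` (Fn n X - Fn 1 X))"

definition qmap :: "'a set \<Rightarrow> 'a set option" where
  "qmap A = (if card A = 1 then None else Some A)"

definition qinv :: "'a set \<Rightarrow> 'a set option \<Rightarrow> 'a set set" where
  "qinv X c = (case c of None \<Rightarrow> Fn 1 X | Some A \<Rightarrow> {A})"

definition rho :: "'a::metric_space set \<Rightarrow> 'a set option \<Rightarrow> 'a set option \<Rightarrow> real" where
  "rho X c1 c2 = hdist dH (Fn 1 X \<union> qinv X c1) (Fn 1 X \<union> qinv X c2)"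

definition SFn_map :: "('a \<Rightarrow> 'a) \<Rightarrow> 'a set option \<Rightarrow> 'a set option" where
  "SFn_map f c = (case c of None \<Rightarrow> None | Some A \<Rightarrow> qmap (Fn_map f A))"

definition D_open :: "'b set \<Rightarrow> ('b \<Rightarrow> 'b \<Rightarrow> real) \<Rightarrow> 'b set \<Rightarrow> bool" where
  "D_open Z D U \<longleftrightarrow> U \<subseteq> Z \<and> (\<forall>x\<in>U. \<exists>e>0. {y\<in>Z. D x y < e} \<subseteq> U)"

definition multi_sensitive :: "'b set \<Rightarrow> ('b \<Rightarrow> 'b \<Rightarrow> real) \<Rightarrow> ('b \<Rightarrow> 'b) \<Rightarrow> bool" where
  "multi_sensitive Z D g \<longleftrightarrow>
     (\<exists>\<delta>>0. \<forall>m\<ge>1. \<forall>U::nat \<Rightarrow> 'b set.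
        (\<forall>i\<in>{1..m}. D_open Z D (U i) \<and> U i \<noteq> {}) \<longrightarrow>
        (\<exists>k\<ge>1. \<forall>i\<in>{1..m}. \<exists>x\<in>U i. \<exists>y\<in>U i. D ((g ^^ k) x) ((g ^^ k) y) > \<delta>))"

end

theory Submission
  imports Defs
begin

(* Multi-sensitivity only has to be checked on finite families of nonempty open sets. Hence each
   implication follows once every nonempty open set U of the target space is matched with finitely
   many nonempty open sets of the source space whose simultaneous separation at time k forces a
   separation inside U at time k (multi_sensitive_transfer):
   - from F_n(f) to f, an open V of X is matched with the sets of F_n(X) contained in V, since
     far apart images of two such sets contain far apart points;
   - from f to F_n(f), a set A in U is matched with small balls around its points: choosing one
     point of a separated pair in each ball gives two sets in U whose images are delta/2 apart;
   - from SF_n(f) to F_n(f), U is matched with its members having at least two points, which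
     exist as X has no isolated points; near such a member rho is bounded below by d_H, and
     rho (q A) (q B) <= d_H A B always. *)

section \<open>Multi-sensitivity via finite families of open sets\<close>

lemma D_open_imp_subset: "D_open Z D U \<Longrightarrow> U \<subseteq> Z"
  by (simp add: D_open_def)

lemma D_openE:
  assumes "D_open Z D U" "x \<in> U"
  obtains e where "0 < e" "{y \<in> Z. D x y < e} \<subseteq> U"
  using assms unfolding D_open_def by blast

lemma D_open_self: "D_open Z D Z"
  by (auto simp: D_open_def intro: exI[of _ 1])

lemma D_open_ball: "D_open X dist {y \<in> X. dist a y < e}"
  unfolding D_open_def
proof (intro conjI ballI)
  fix x assume x: "x \<in> {y \<in> X. dist a y < e}"
  have "dist a y < e" if "dist x y < e - dist a x" for y
    using dist_triangle[of a y x] that by linarith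
  then have "{y \<in> X. dist x y < e - dist a x} \<subseteq> {y \<in> X. dist a y < e}" by auto
  then show "\<exists>r>0. {y \<in> X. dist x y < r} \<subseteq> {y \<in> X. dist a y < e}"
    using x by (intro exI[of _ "e - dist a x"]) auto
qed auto

definition separates :: "('b \<Rightarrow> 'b \<Rightarrow> real) \<Rightarrow> ('b \<Rightarrow> 'b) \<Rightarrow> real \<Rightarrow> nat \<Rightarrow> 'b set \<Rightarrow> bool" where
  "separates D g \<delta> k U \<longleftrightarrow> (\<exists>x\<in>U. \<exists>y\<in>U. \<delta> < D ((g ^^ k) x) ((g ^^ k) y))"

lemma multi_sensitive_iff_finite_families:
  "multi_sensitive Z D g \<longleftrightarrow>
     (\<exists>\<delta>>0. \<forall>\<U>. finite \<U> \<longrightarrow> (\<forall>U\<in>\<U>. D_open Z D U \<and> U \<noteq> {}) \<longrightarrow>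
        (\<exists>k\<ge>1. \<forall>U\<in>\<U>. separates D g \<delta> k U))"
  (is "_ \<longleftrightarrow> (\<exists>\<delta>>0. ?families \<delta>)")
proof -
  have families_iff: "?families \<delta> \<longleftrightarrow> (\<forall>m\<ge>1. \<forall>U::nat \<Rightarrow> _. (\<forall>i\<in>{1..m}. D_open Z D (U i) \<and> U i \<noteq> {}) \<longrightarrow>
      (\<exists>k\<ge>1. \<forall>i\<in>{1..m}. separates D g \<delta> k (U i)))" (is "_ \<longleftrightarrow> ?indexed") for \<delta>
  proof
    assume families: "?families \<delta>"
    show ?indexed
    proof (intro allI impI)
      fix m and U :: "nat \<Rightarrow> _" assume "\<forall>i\<in>{1..m}. D_open Z D (U i) \<and> U i \<noteq> {}"
      then obtain k where "1 \<le> k" "\<forall>V\<in>U ` {1..m}. separates D g \<delta> k V"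
        using families[rule_format, of "U ` {1..m}"] by auto
      then show "\<exists>k\<ge>1. \<forall>i\<in>{1..m}. separates D g \<delta> k (U i)" by auto
    qed
  next
    assume indexed: ?indexed
    show "?families \<delta>"
    proof (intro allI impI)
      fix \<U> assume \<U>: "finite \<U>" "\<forall>U\<in>\<U>. D_open Z D U \<and> U \<noteq> {}"
      show "\<exists>k\<ge>1. \<forall>U\<in>\<U>. separates D g \<delta> k U"
      proof (cases "\<U> = {}")
        case False
        obtain h where h: "h ` {1..card \<U>} = \<U>"
          using ex_bij_betw_nat_finite_1[OF \<U>(1)] by (auto simp: bij_betw_def)
        have "1 \<le> card \<U>" using False \<U>(1) by (simp add: Suc_le_eq card_gt_0_iff)
        moreover have "\<forall>i\<in>{1..card \<U>}. D_open Z D (h i) \<and> h i \<noteq> {}" using h \<U>(2) by auto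
        ultimately obtain k where k: "1 \<le> k" "\<forall>i\<in>{1..card \<U>}. separates D g \<delta> k (h i)"
          using indexed[rule_format, of "card \<U>" h] by blast
        show ?thesis
        proof (intro exI[of _ k] conjI ballI)
          fix U assume "U \<in> \<U>"
          then obtain i where "i \<in> {1..card \<U>}" "U = h i" using h by blast
          then show "separates D g \<delta> k U" using k(2) by blast
        qed (rule k(1))
      qed auto
    qed
  qed
  show ?thesis unfolding multi_sensitive_def separates_def[symmetric] families_iff ..
qed

lemma multi_sensitive_transfer:
  assumes "multi_sensitive Z D g" "0 < c"
    and "\<And>\<delta> U. 0 < \<delta> \<Longrightarrow> D_open Z' D' U \<Longrightarrow> U \<noteq> {} \<Longrightarrow>
      \<exists>\<W>. finite \<W> \<and> (\<forall>W\<in>\<W>. D_open Z D W \<and> W \<noteq> {}) \<and>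
        (\<forall>k. (\<forall>W\<in>\<W>. separates D g \<delta> k W) \<longrightarrow> separates D' g' (c * \<delta>) k U)"
  shows "multi_sensitive Z' D' g'"
proof -
  obtain \<delta> where \<delta>: "0 < \<delta>" and H: "\<forall>\<U>. finite \<U> \<longrightarrow> (\<forall>U\<in>\<U>. D_open Z D U \<and> U \<noteq> {}) \<longrightarrow>
      (\<exists>k\<ge>1. \<forall>U\<in>\<U>. separates D g \<delta> k U)"
    using assms(1) unfolding multi_sensitive_iff_finite_families by (elim exE conjE) (rule that)
  have "\<exists>k\<ge>1. \<forall>U\<in>\<U>. separates D' g' (c * \<delta>) k U"
    if \<U>: "finite \<U>" "\<forall>U\<in>\<U>. D_open Z' D' U \<and> U \<noteq> {}" for \<U>
  proof -
    have "\<forall>U\<in>\<U>. \<exists>\<W>. finite \<W> \<and> (\<forall>W\<in>\<W>. D_open Z D W \<and> W \<noteq> {}) \<and>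
        (\<forall>k. (\<forall>W\<in>\<W>. separates D g \<delta> k W) \<longrightarrow> separates D' g' (c * \<delta>) k U)"
      using \<U>(2) by (intro ballI assms(3)[OF \<delta>]) auto
    then obtain \<W> where \<W>: "\<forall>U\<in>\<U>. finite (\<W> U) \<and> (\<forall>W\<in>\<W> U. D_open Z D W \<and> W \<noteq> {}) \<and>
        (\<forall>k. (\<forall>W\<in>\<W> U. separates D g \<delta> k W) \<longrightarrow> separates D' g' (c * \<delta>) k U)"
      by (rule bchoice[THEN exE])
    have "finite (\<Union>(\<W> ` \<U>))" "\<forall>W\<in>\<Union>(\<W> ` \<U>). D_open Z D W \<and> W \<noteq> {}"
      using \<U>(1) \<W> by auto
    then obtain k where k: "1 \<le> k" "\<forall>W\<in>\<Union>(\<W> ` \<U>). separates D g \<delta> k W"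
      using H[rule_format] by blast
    have "separates D' g' (c * \<delta>) k U" if "U \<in> \<U>" for U
      using \<W> k(2) that by blast
    then show ?thesis using k(1) by blast
  qed
  then show ?thesis
    unfolding multi_sensitive_iff_finite_families
    by (intro exI[of _ "c * \<delta>"] conjI allI impI) (use \<delta> assms(2) in simp_all)
qed

lemma not_multi_sensitive_fixed_singleton:
  assumes "g z = z" "D z z \<le> 0"
  shows "\<not> multi_sensitive {z} D g"
proof
  assume "multi_sensitive {z} D g"
  then obtain \<delta> where \<delta>: "0 < \<delta>" and H: "\<forall>\<U>. finite \<U> \<longrightarrow> (\<forall>U\<in>\<U>. D_open {z} D U \<and> U \<noteq> {}) \<longrightarrow>
      (\<exists>k\<ge>1. \<forall>U\<in>\<U>. separates D g \<delta> k U)"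
    unfolding multi_sensitive_iff_finite_families by (elim exE conjE) (rule that)
  obtain k where "separates D g \<delta> k {z}"
    using H[rule_format, of "{{z}}"] D_open_self[of "{z}" D] by auto
  moreover have "(g ^^ k) z = z" by (induction k) (simp_all add: assms(1))
  ultimately show False using \<delta> assms(2) by (simp add: separates_def)
qed

section \<open>The Hausdorff distance\<close>

lemma hdist_le:
  assumes "S \<noteq> {}" "T \<noteq> {}" "\<And>s t. s \<in> S \<Longrightarrow> t \<in> T \<Longrightarrow> 0 \<le> D s t"
    and "\<And>s. s \<in> S \<Longrightarrow> \<exists>t\<in>T. D s t \<le> c" "\<And>t. t \<in> T \<Longrightarrow> \<exists>s\<in>S. D s t \<le> c"
  shows "hdist D S T \<le> c"
  unfolding hdist_def
proof (rule max.boundedI)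
  show "(SUP s\<in>S. INF t\<in>T. D s t) \<le> c"
  proof (rule cSUP_least[OF assms(1)])
    fix s assume s: "s \<in> S"
    then obtain t where "t \<in> T" "D s t \<le> c" using assms(4) by blast
    moreover have "bdd_below (D s ` T)" using assms(3) s by (auto intro!: bdd_belowI2)
    ultimately show "(INF t\<in>T. D s t) \<le> c" by (meson cINF_lower order_trans)
  qed
  show "(SUP t\<in>T. INF s\<in>S. D s t) \<le> c"
  proof (rule cSUP_least[OF assms(2)])
    fix t assume t: "t \<in> T"
    then obtain s where "s \<in> S" "D s t \<le> c" using assms(5) by blast
    moreover have "bdd_below ((\<lambda>s. D s t) ` S)" using assms(3) t by (auto intro!: bdd_belowI2)
    ultimately show "(INF s\<in>S. D s t) \<le> c" by (meson cINF_lower order_trans)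
  qed
qed

lemma INF_le_hdist:
  assumes "s \<in> S" "bdd_above ((\<lambda>s. INF t\<in>T. D s t) ` S)"
  shows "(INF t\<in>T. D s t) \<le> hdist D S T"
  unfolding hdist_def using cSUP_upper[OF assms] by linarith

lemma dH_eq_Max_infdist:
  assumes "finite A" "finite B" "A \<noteq> {}" "B \<noteq> {}"
  shows "dH A B = max (Max ((\<lambda>a. infdist a B) ` A)) (Max ((\<lambda>b. infdist b A) ` B))"
proof -
  have "(INF b\<in>B. dist a b) = infdist a B" "(INF a\<in>A. dist a b) = infdist b A" for a b
    using assms by (simp_all add: infdist_notempty dist_commute)
  then show ?thesis using assms by (simp add: dH_def hdist_def cSup_eq_Max)
qed

lemma infdist_le_dH1:
  assumes "finite A" "finite B" "a \<in> A" "B \<noteq> {}"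
  shows "infdist a B \<le> dH A B"
proof -
  have "infdist a B \<le> Max ((\<lambda>a. infdist a B) ` A)" using assms by (intro Max_ge) auto
  also have "\<dots> \<le> dH A B" using assms by (subst dH_eq_Max_infdist) auto
  finally show ?thesis .
qed

lemma infdist_le_dH2:
  assumes "finite A" "finite B" "A \<noteq> {}" "b \<in> B"
  shows "infdist b A \<le> dH A B"
proof -
  have "infdist b A \<le> Max ((\<lambda>b. infdist b A) ` B)" using assms by (intro Max_ge) auto
  also have "\<dots> \<le> dH A B" using assms by (subst dH_eq_Max_infdist) auto
  finally show ?thesis .
qed

lemma dH_nonneg:
  assumes "finite A" "finite B" "A \<noteq> {}" "B \<noteq> {}"
  shows "0 \<le> dH A B"
  using assms infdist_le_dH1[OF assms(1,2) _ assms(4)] infdist_nonneg by (meson ex_in_conv order_trans)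

lemma dH_le:
  assumes "A \<noteq> {}" "B \<noteq> {}"
    and "\<And>a. a \<in> A \<Longrightarrow> \<exists>b\<in>B. dist a b \<le> c" "\<And>b. b \<in> B \<Longrightarrow> \<exists>a\<in>A. dist a b \<le> c"
  shows "dH A B \<le> c"
  unfolding dH_def using assms by (intro hdist_le) auto

lemma dH_self:
  assumes "finite A" "A \<noteq> {}"
  shows "dH A A = 0"
  using dH_le[OF assms(2) assms(2), of 0] dH_nonneg[OF assms(1) assms assms(2)] by fastforce

lemma dH_image_less:
  assumes "finite J" "J \<noteq> {}" "\<And>j. j \<in> J \<Longrightarrow> dist (a j) (b j) < e"
  shows "dH (a ` J) (b ` J) < e"
proof -
  define c where "c = Max ((\<lambda>j. dist (a j) (b j)) ` J)"
  have "dist (a j) (b j) \<le> c" if "j \<in> J" for j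
    using assms that by (auto simp: c_def)
  then have "dH (a ` J) (b ` J) \<le> c"
    using assms by (intro dH_le) fastforce+
  moreover have "c < e" using assms by (simp add: c_def)
  ultimately show ?thesis by linarith
qed

lemma dH_gt_imp_far_points:
  assumes "finite A" "finite B" "A \<noteq> {}" "B \<noteq> {}" "d < dH A B"
  obtains a b where "a \<in> A" "b \<in> B" "d < dist a b"
proof -
  have "(\<exists>a\<in>A. d < infdist a B) \<or> (\<exists>b\<in>B. d < infdist b A)"
    using assms by (simp add: dH_eq_Max_infdist less_max_iff_disj Max_gr_iff)
  moreover obtain a0 b0 where "a0 \<in> A" "b0 \<in> B" using assms by blast
  ultimately show ?thesis
    using that infdist_le by (metis dist_commute order_less_le_trans)
qed

lemma dH_less_imp_near_point:
  assumes "finite A" "finite B" "A \<noteq> {}" "b \<in> B" "dH A B < e"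
  obtains a where "a \<in> A" "dist a b < e"
proof -
  have "infdist b A < e" using infdist_le_dH2[OF assms(1-4)] assms(5) by linarith
  then obtain a where "a \<in> A" "dist b a < e"
    using assms(3) by (auto simp: infdist_notempty cINF_less_iff)
  then show ?thesis using that by (simp add: dist_commute)
qed

lemma dH_singleton_ge:
  assumes "finite B" "b1 \<in> B" "b2 \<in> B"
  shows "dist b1 b2 / 2 \<le> dH B {x}"
  using infdist_le_dH1[OF assms(1) _ assms(2), of "{x}"] infdist_le_dH1[OF assms(1) _ assms(3), of "{x}"]
    dist_triangle2[of b1 b2 x] by simp

lemma dH_image_choice_far:
  assumes "finite A" "A \<noteq> {}" "\<And>a. a \<in> A \<Longrightarrow> \<delta> < dist (F (x a)) (F (y a))"
  obtains t where "\<And>a. a \<in> A \<Longrightarrow> t a \<in> {x a, y a}" "\<delta> / 2 < dH (F ` x ` A) (F ` t ` A)"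
proof -
  obtain a0 where a0: "a0 \<in> A" using assms by blast
  define t where "t a = (if \<delta> / 2 < dist (F (x a0)) (F (x a)) then x a else y a)" for a
  have "\<delta> / 2 < dist (F (x a0)) (F (t a))" if "a \<in> A" for a
    using assms(3)[OF that] dist_triangle3[of "F (x a)" "F (y a)" "F (x a0)"]
    by (auto simp: t_def dist_commute)
  then have "\<delta> / 2 < infdist (F (x a0)) (F ` t ` A)"
    using assms by (subst infdist_notempty, blast, subst finite_less_Inf_iff) auto
  also have "\<dots> \<le> dH (F ` x ` A) (F ` t ` A)"
    using assms a0 by (intro infdist_le_dH1) auto
  finally have "\<delta> / 2 < dH (F ` x ` A) (F ` t ` A)" .
  then show ?thesis by (intro that[of t]) (auto simp: t_def)
qed

section \<open>Symmetric products\<close>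

lemma Fn_one_eq: "Fn 1 X = (\<lambda>x. {x}) ` X"
proof -
  have "A \<in> Fn 1 X \<longleftrightarrow> (\<exists>x\<in>X. A = {x})" for A :: "'a set"
    by (auto simp: Fn_def card_le_Suc0_iff_eq) blast
  then show ?thesis by blast
qed

lemma image_in_Fn: "A \<in> Fn n X \<Longrightarrow> g ` A \<subseteq> Y \<Longrightarrow> g ` A \<in> Fn n Y"
  by (auto simp: Fn_def intro: card_image_le order_trans)

lemma Fn_map_iterate: "(Fn_map f ^^ k) A = (f ^^ k) ` A"
  by (induction k) (auto simp: Fn_map_def image_comp)

lemma funpow_image_subset: "f ` X \<subseteq> X \<Longrightarrow> (f ^^ k) ` X \<subseteq> X"
  by (induction k) auto

lemma funpow_image_in_Fn: "f ` X \<subseteq> X \<Longrightarrow> A \<in> Fn n X \<Longrightarrow> (f ^^ k) ` A \<in> Fn n X"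
  using funpow_image_subset[of f X k] by (intro image_in_Fn) (auto simp: Fn_def image_subset_iff)

lemma D_open_Fn_subsets:
  assumes "D_open X dist V"
  shows "D_open (Fn n X) dH {A \<in> Fn n X. A \<subseteq> V}"
proof -
  have "\<exists>e>0. {B \<in> Fn n X. dH A B < e} \<subseteq> {A \<in> Fn n X. A \<subseteq> V}"
    if A: "A \<in> Fn n X" "A \<subseteq> V" for A
  proof -
    have fin: "finite A" "A \<noteq> {}" using A(1) by (auto simp: Fn_def)
    have "\<forall>a\<in>A. \<exists>r>0. {y \<in> X. dist a y < r} \<subseteq> V" using assms A(2) unfolding D_open_def by blast
    then obtain r where r: "\<forall>a\<in>A. 0 < r a \<and> {y \<in> X. dist a y < r a} \<subseteq> V"
      by (rule bchoice[THEN exE])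
    define e where "e = Min (r ` A)"
    have "B \<subseteq> V" if B: "B \<in> Fn n X" "dH A B < e" for B
    proof
      fix b assume b: "b \<in> B"
      obtain a where a: "a \<in> A" "dist a b < e"
        using dH_less_imp_near_point[OF fin(1) _ fin(2) b B(2)] B(1) by (auto simp: Fn_def)
      moreover have "e \<le> r a" using fin a by (simp add: e_def)
      ultimately have "b \<in> {y \<in> X. dist a y < r a}" using b B(1) by (auto simp: Fn_def)
      then show "b \<in> V" using r a(1) by blast
    qed
    moreover have "0 < e" using fin r by (simp add: e_def)
    ultimately show ?thesis by blast
  qed
  then show ?thesis unfolding D_open_def by blast
qed

lemma D_open_Fn_has_multipoint:
  assumes "D_open (Fn n X) dH U" "U \<noteq> {}" "2 \<le> n" "\<And>a. a \<in> X \<Longrightarrow> a islimpt X"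
  obtains C where "C \<in> U" "2 \<le> card C"
proof -
  obtain A where A: "A \<in> U" using assms(2) by blast
  obtain e where e: "0 < e" "{B \<in> Fn n X. dH A B < e} \<subseteq> U"
    using D_openE[OF assms(1) A] by blast
  show ?thesis
  proof (cases "2 \<le> card A")
    case False
    then have "A \<in> Fn 1 X" using A D_open_imp_subset[OF assms(1)] by (auto simp: Fn_def)
    then obtain a where a: "A = {a}" "a \<in> X" unfolding Fn_one_eq by blast
    obtain b where b: "b \<in> X" "b \<noteq> a" "dist b a < e"
      using assms(4)[OF a(2)] e(1) by (auto simp: islimpt_approachable)
    have "dH {a} {a, b} \<le> dist a b" by (intro dH_le) auto
    then have "{a, b} \<in> U" using e(2) a b assms(3) by (auto simp: Fn_def dist_commute)
    then show ?thesis using that b(2) by fastforce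
  qed (use A that in blast)
qed

section \<open>The quotient space SF_n(X)\<close>

lemma qinv_qmap:
  assumes "P \<in> Fn n X"
  shows "Fn 1 X \<union> qinv X (qmap P) = insert P (Fn 1 X)"
proof (cases "card P = 1")
  case True
  then have "P \<in> Fn 1 X" using assms by (auto simp: Fn_def)
  then show ?thesis using True by (auto simp: qmap_def qinv_def)
qed (auto simp: qmap_def qinv_def)

lemma SFn_map_qmap:
  assumes "finite C" "C \<noteq> {}"
  shows "SFn_map f (qmap C) = qmap (f ` C)"
proof (cases "card C = 1")
  case True
  then obtain c where "C = {c}" by (auto simp: card_Suc_eq)
  then show ?thesis by (simp add: SFn_map_def qmap_def)
qed (simp add: SFn_map_def qmap_def Fn_map_def)

lemma SFn_map_iterate_qmap:
  assumes "finite C" "C \<noteq> {}"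
  shows "(SFn_map f ^^ k) (qmap C) = qmap ((f ^^ k) ` C)"
  by (induction k) (use assms in \<open>auto simp: SFn_map_qmap image_comp\<close>)

lemma rho_qmap_le:
  assumes "P \<in> Fn n X" "Q \<in> Fn m X"
  shows "rho X (qmap P) (qmap Q) \<le> dH P Q"
proof -
  have fin: "finite t" "t \<noteq> {}" if "t \<in> insert P (Fn 1 X) \<union> insert Q (Fn 1 X)" for t
    using that assms by (auto simp: Fn_def)
  have self: "dH s s = 0" if "s \<in> Fn 1 X" for s
    using that by (intro dH_self) (auto simp: Fn_def)
  have PQ: "0 \<le> dH P Q" using fin by (intro dH_nonneg) auto
  show ?thesis
    unfolding rho_def qinv_qmap[OF assms(1)] qinv_qmap[OF assms(2)]
  proof (rule hdist_le)
    show "0 \<le> dH s t" if "s \<in> insert P (Fn 1 X)" "t \<in> insert Q (Fn 1 X)" for s t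
      using that fin by (intro dH_nonneg) auto
    show "\<exists>t\<in>insert Q (Fn 1 X). dH s t \<le> dH P Q" if "s \<in> insert P (Fn 1 X)" for s
      using that self PQ by (metis insert_iff order_refl)
    show "\<exists>s\<in>insert P (Fn 1 X). dH s t \<le> dH P Q" if "t \<in> insert Q (Fn 1 X)" for t
      using that self PQ by (metis insert_iff order_refl)
  qed auto
qed

lemma rho_Some_ge:
  assumes "B \<in> Fn n X" "c \<in> SFn m X" "\<And>t. t \<in> Fn 1 X \<union> qinv X c \<Longrightarrow> r \<le> dH B t"
  shows "r \<le> rho X (Some B) c"
proof -
  let ?T = "Fn 1 X \<union> qinv X c"
  have fin: "finite t" "t \<noteq> {}" if "t \<in> ?T" for t
    using that assms(2) by (auto simp: Fn_def qinv_def SFn_def split: option.splits)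
  have "X \<noteq> {}" using assms(1) by (auto simp: Fn_def)
  then have "?T \<noteq> {}" unfolding Fn_one_eq by blast
  then have "r \<le> (INF t\<in>?T. dH B t)" using assms(3) by (intro cINF_greatest) auto
  also have "\<dots> \<le> hdist dH (Fn 1 X \<union> {B}) ?T"
  proof (rule INF_le_hdist)
    \<comment> \<open>the points of F_1(X) also lie in ?T, so they contribute 0 to the supremum\<close>
    have "(INF t\<in>?T. dH s t) \<le> dH s s" if "s \<in> Fn 1 X" for s
      using fin that by (intro cINF_lower bdd_belowI2[where m=0] dH_nonneg) auto
    also have "dH s s = 0" if "s \<in> Fn 1 X" for s
      using that by (intro dH_self) (auto simp: Fn_def)
    finally have "bdd_above ((\<lambda>s. INF t\<in>?T. dH s t) ` Fn 1 X)"
      by (intro bdd_aboveI2[where M=0])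
    then show "bdd_above ((\<lambda>s. INF t\<in>?T. dH s t) ` (Fn 1 X \<union> {B}))"
      by simp
  qed simp
  finally show ?thesis by (simp add: rho_def qinv_def)
qed

(* A set with two points at distance d is d/2 away from every singleton, so within distance d/2
   of it rho only sees the sets themselves. *)
lemma rho_Some_less_half_dist:
  assumes "B \<in> Fn n X" "b1 \<in> B" "b2 \<in> B" "y \<in> SFn m X" "rho X (Some B) y < dist b1 b2 / 2"
  obtains C where "y = Some C" "C \<in> Fn m X" "2 \<le> card C" "dH B C \<le> rho X (Some B) y"
proof -
  have B: "finite B" using assms(1) by (simp add: Fn_def)
  have far: "dist b1 b2 / 2 \<le> dH B t" if "t \<in> Fn 1 X" for t
    using that dH_singleton_ge[OF B assms(2,3)] unfolding Fn_one_eq by blast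
  show ?thesis
  proof (cases y)
    case None
    then show ?thesis using rho_Some_ge[OF assms(1,4) far] assms(5) by (simp add: qinv_def)
  next
    case (Some C)
    then have C: "C \<in> Fn m X" "C \<notin> Fn 1 X" using assms(4) by (auto simp: SFn_def)
    have "min (dist b1 b2 / 2) (dH B C) \<le> dH B t" if "t \<in> Fn 1 X \<union> qinv X y" for t
      using that Some far[THEN min.coboundedI1] by (auto simp: qinv_def)
    then have "min (dist b1 b2 / 2) (dH B C) \<le> rho X (Some B) y"
      using rho_Some_ge[OF assms(1,4)] by blast
    moreover have "2 \<le> card C" using C by (auto simp: Fn_def)
    ultimately show ?thesis using that Some C assms(5) by (auto simp: min_le_iff_disj)
  qed
qed

lemma D_open_SFn_multipoint:
  assumes "D_open (Fn n X) dH U"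
  shows "D_open (SFn n X) (rho X) (Some ` {C \<in> U. 2 \<le> card C})"
  unfolding D_open_def
proof (intro conjI ballI)
  have UF: "U \<subseteq> Fn n X" using assms by (rule D_open_imp_subset)
  have "C \<in> Fn n X - Fn 1 X" if "C \<in> U" "2 \<le> card C" for C
    using that UF by (auto simp: Fn_def)
  then show "Some ` {C \<in> U. 2 \<le> card C} \<subseteq> SFn n X" by (auto simp: SFn_def)
  fix x assume "x \<in> Some ` {C \<in> U. 2 \<le> card C}"
  then obtain B where B: "x = Some B" "B \<in> U" "2 \<le> card B" by blast
  then have BF: "B \<in> Fn n X" using UF by blast
  obtain e where e: "0 < e" "{C \<in> Fn n X. dH B C < e} \<subseteq> U"
    using D_openE[OF assms B(2)] by blast
  have "\<not> card B \<le> Suc 0" using B(3) by simp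
  then obtain b1 b2 where b: "b1 \<in> B" "b2 \<in> B" "b1 \<noteq> b2"
    using BF by (auto simp: Fn_def card_le_Suc0_iff_eq)
  have "y \<in> Some ` {C \<in> U. 2 \<le> card C}"
    if y: "y \<in> SFn n X" "rho X x y < min e (dist b1 b2 / 2)" for y
  proof -
    obtain C where C: "y = Some C" "C \<in> Fn n X" "2 \<le> card C" "dH B C \<le> rho X (Some B) y"
      using rho_Some_less_half_dist[OF BF b(1,2) y(1)] y(2) B(1) by auto
    then have "C \<in> U" using e y(2) B(1) by auto
    then show ?thesis using C(1,3) by blast
  qed
  moreover have "0 < min e (dist b1 b2 / 2)" using e(1) b(3) by simp
  ultimately show "\<exists>r>0. {y \<in> SFn n X. rho X x y < r} \<subseteq> Some ` {C \<in> U. 2 \<le> card C}"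
    by blast
qed

section \<open>Transfer of multi-sensitivity\<close>

lemma multi_sensitive_Fn_imp_multi_sensitive:
  assumes "multi_sensitive (Fn n X) dH (Fn_map f)" "1 \<le> n"
  shows "multi_sensitive X dist f"
proof (rule multi_sensitive_transfer[OF assms(1), of 1])
  fix \<delta> :: real and V assume V: "D_open X dist V" "V \<noteq> {}"
  let ?W = "{A \<in> Fn n X. A \<subseteq> V}"
  have "separates dist f (1 * \<delta>) k V" if sep: "separates dH (Fn_map f) \<delta> k ?W" for k
  proof -
    obtain A B where AB: "A \<in> ?W" "B \<in> ?W" "\<delta> < dH ((f ^^ k) ` A) ((f ^^ k) ` B)"
      using sep unfolding separates_def Fn_map_iterate by blast
    moreover have "finite ((f ^^ k) ` A)" "finite ((f ^^ k) ` B)"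
      and "(f ^^ k) ` A \<noteq> {}" "(f ^^ k) ` B \<noteq> {}"
      using AB by (auto simp: Fn_def)
    ultimately obtain p q where "p \<in> (f ^^ k) ` A" "q \<in> (f ^^ k) ` B" "\<delta> < dist p q"
      by (metis dH_gt_imp_far_points)
    then obtain a b where "a \<in> A" "b \<in> B" "\<delta> < dist ((f ^^ k) a) ((f ^^ k) b)" by blast
    moreover have "A \<subseteq> V" "B \<subseteq> V" using AB by auto
    ultimately show ?thesis unfolding separates_def by auto
  qed
  moreover obtain v where "v \<in> V" using V by blast
  then have "{v} \<in> ?W" using D_open_imp_subset[OF V(1)] assms(2) by (auto simp: Fn_def)
  ultimately show "\<exists>\<W>. finite \<W> \<and> (\<forall>W\<in>\<W>. D_open (Fn n X) dH W \<and> W \<noteq> {}) \<and>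
      (\<forall>k. (\<forall>W\<in>\<W>. separates dH (Fn_map f) \<delta> k W) \<longrightarrow> separates dist f (1 * \<delta>) k V)"
    using D_open_Fn_subsets[OF V(1)] by (intro exI[of _ "{?W}"]) auto
qed simp

lemma multi_sensitive_imp_multi_sensitive_Fn:
  assumes "multi_sensitive X dist f"
  shows "multi_sensitive (Fn n X) dH (Fn_map f)"
proof (rule multi_sensitive_transfer[OF assms, of "1 / 2"])
  fix \<delta> :: real and U assume U: "D_open (Fn n X) dH U" "U \<noteq> {}"
  obtain A where A: "A \<in> U" using U(2) by blast
  obtain e where e: "0 < e" "{B \<in> Fn n X. dH A B < e} \<subseteq> U"
    using D_openE[OF U(1) A] by blast
  have AF: "A \<in> Fn n X" "finite A" "A \<noteq> {}"
    using A D_open_imp_subset[OF U(1)] by (auto simp: Fn_def)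
  define nbhd where "nbhd a = {y \<in> X. dist a y < e}" for a
  have near_in_U: "x ` A \<in> U" if "\<And>a. a \<in> A \<Longrightarrow> x a \<in> nbhd a" for x
  proof -
    have "x ` A \<in> Fn n X" using AF(1) that by (intro image_in_Fn) (auto simp: nbhd_def)
    moreover have "dH (id ` A) (x ` A) < e" using AF that by (intro dH_image_less) (auto simp: nbhd_def)
    ultimately show ?thesis using e(2) by auto
  qed
  have "separates dH (Fn_map f) (1 / 2 * \<delta>) k U" if "\<forall>W\<in>nbhd ` A. separates dist f \<delta> k W" for k
  proof -
    have "\<forall>a\<in>A. \<exists>x. \<exists>y. x \<in> nbhd a \<and> y \<in> nbhd a \<and> \<delta> < dist ((f ^^ k) x) ((f ^^ k) y)"
      using that unfolding separates_def by blast
    then obtain x where "\<forall>a\<in>A. \<exists>y. x a \<in> nbhd a \<and> y \<in> nbhd a \<and>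
        \<delta> < dist ((f ^^ k) (x a)) ((f ^^ k) y)"
      by (rule bchoice[THEN exE])
    then obtain y where xy: "\<forall>a\<in>A. x a \<in> nbhd a \<and> y a \<in> nbhd a \<and>
        \<delta> < dist ((f ^^ k) (x a)) ((f ^^ k) (y a))"
      by (rule bchoice[THEN exE])
    then obtain t where t: "\<And>a. a \<in> A \<Longrightarrow> t a \<in> {x a, y a}"
      "\<delta> / 2 < dH ((f ^^ k) ` x ` A) ((f ^^ k) ` t ` A)"
      using dH_image_choice_far[OF AF(2,3), of \<delta> "f ^^ k" x y] by blast
    have "x ` A \<in> U" using xy by (intro near_in_U) blast
    moreover have "t ` A \<in> U" using xy t(1) by (intro near_in_U) fastforce
    ultimately show ?thesis using t(2) by (auto simp: separates_def Fn_map_iterate)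
  qed
  moreover have "\<forall>W\<in>nbhd ` A. D_open X dist W \<and> W \<noteq> {}"
    using AF(1) e(1) by (auto simp: nbhd_def D_open_ball Fn_def)
  ultimately show "\<exists>\<W>. finite \<W> \<and> (\<forall>W\<in>\<W>. D_open X dist W \<and> W \<noteq> {}) \<and>
      (\<forall>k. (\<forall>W\<in>\<W>. separates dist f \<delta> k W) \<longrightarrow> separates dH (Fn_map f) (1 / 2 * \<delta>) k U)"
    using AF(2) by (intro exI[of _ "nbhd ` A"]) auto
qed simp

lemma multi_sensitive_SFn_imp_multi_sensitive_Fn:
  assumes "multi_sensitive (SFn n X) (rho X) (SFn_map f)" "2 \<le> n" "f ` X \<subseteq> X"
    and "\<And>a. a \<in> X \<Longrightarrow> a islimpt X"
  shows "multi_sensitive (Fn n X) dH (Fn_map f)"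
proof (rule multi_sensitive_transfer[OF assms(1), of 1])
  fix \<delta> :: real and U assume U: "D_open (Fn n X) dH U" "U \<noteq> {}"
  let ?W = "Some ` {C \<in> U. 2 \<le> card C}"
  have "separates dH (Fn_map f) (1 * \<delta>) k U" if sep: "separates (rho X) (SFn_map f) \<delta> k ?W" for k
  proof -
    obtain B C where BC: "B \<in> U" "C \<in> U" "2 \<le> card B" "2 \<le> card C"
      "\<delta> < rho X ((SFn_map f ^^ k) (Some B)) ((SFn_map f ^^ k) (Some C))"
      using sep unfolding separates_def by blast
    have F: "B \<in> Fn n X" "C \<in> Fn n X" using BC D_open_imp_subset[OF U(1)] by auto
    have "(f ^^ k) ` B \<in> Fn n X" "(f ^^ k) ` C \<in> Fn n X"
      using F funpow_image_in_Fn[OF assms(3)] by blast+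
    moreover have "Some B = qmap B" "Some C = qmap C" using BC by (auto simp: qmap_def)
    then have "\<delta> < rho X (qmap ((f ^^ k) ` B)) (qmap ((f ^^ k) ` C))"
      using BC(5) F by (simp add: SFn_map_iterate_qmap Fn_def)
    ultimately have "\<delta> < dH ((f ^^ k) ` B) ((f ^^ k) ` C)"
      using rho_qmap_le by fastforce
    then show ?thesis using BC by (auto simp: separates_def Fn_map_iterate)
  qed
  moreover have "?W \<noteq> {}" using D_open_Fn_has_multipoint[OF U assms(2,4)] by blast
  ultimately show "\<exists>\<W>. finite \<W> \<and> (\<forall>W\<in>\<W>. D_open (SFn n X) (rho X) W \<and> W \<noteq> {}) \<and>
      (\<forall>k. (\<forall>W\<in>\<W>. separates (rho X) (SFn_map f) \<delta> k W) \<longrightarrow> separates dH (Fn_map f) (1 * \<delta>) k U)"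
    using D_open_SFn_multipoint[OF U(1)] by (intro exI[of _ "{?W}"]) auto
qed simp

lemma multi_sensitive_SFn_imp_not_singleton:
  assumes "multi_sensitive (SFn n X) (rho X) (SFn_map f)"
  shows "X \<noteq> {p}"
proof
  assume X: "X = {p}"
  then have no_multipoint: "Fn n X - Fn 1 X = {}" by (auto simp: Fn_def Fn_one_eq subset_singleton_iff)
  then have "SFn n X = {None}" by (simp only: SFn_def no_multipoint image_empty)
  moreover have "Fn 1 X = {{p}}" unfolding Fn_one_eq X by simp
  then have "rho X None None \<le> 0" unfolding rho_def qinv_def by (simp add: hdist_def dH_self)
  ultimately show False
    using assms not_multi_sensitive_fixed_singleton[of "SFn_map f" None "rho X"]
    by (simp add: SFn_map_def)
qed

theorem theorem3:
  fixes X :: "'a::metric_space set" and f :: "'a \<Rightarrow> 'a" and n :: nat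
  assumes "continuum X" and "n \<ge> 2"
    and "continuous_on X f" and "f ` X \<subseteq> X"
  shows "(multi_sensitive X dist f \<longleftrightarrow> multi_sensitive (Fn n X) dH (Fn_map f))
       \<and> (multi_sensitive (SFn n X) (rho X) (SFn_map f) \<longrightarrow> multi_sensitive (Fn n X) dH (Fn_map f))"
proof (intro conjI iffI impI)
  show "multi_sensitive (Fn n X) dH (Fn_map f)" if "multi_sensitive X dist f"
    using that by (rule multi_sensitive_imp_multi_sensitive_Fn)
  show "multi_sensitive X dist f" if "multi_sensitive (Fn n X) dH (Fn_map f)"
    using that assms(2) by (intro multi_sensitive_Fn_imp_multi_sensitive) auto
next
  assume SF: "multi_sensitive (SFn n X) (rho X) (SFn_map f)"
  have "a islimpt X" if "a \<in> X" for a
    using assms(1) that multi_sensitive_SFn_imp_not_singleton[OF SF]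
    by (intro connected_imp_perfect) (auto simp: continuum_def)
  then show "multi_sensitive (Fn n X) dH (Fn_map f)"
    using multi_sensitive_SFn_imp_multi_sensitive_Fn[OF SF assms(2,4)] by blast
qed

end
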